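(* Let $G$ be a finite simple graph and $c_0:V(G)\to\mathbb{Z}$ an initial configuration, with $(c_t)_{t\ge0}$ the configurations of the diffusion process. Then $G$ with $c_0$ is tight if and only if there exists $t\geq 0$ such that $c_t$ has property plus.
   Context: Diffusion process: for a configuration $c_t:V(G)\to\mathbb{Z}$ and a vertex $u$, let $\Delta_t^-(u)=|\{w\in N(u): c_t(u)>c_t(w)\}|$, $\Delta_t^+(u)=|\{w\in N(u): c_t(u)<c_t(w)\}|$ and $\Delta_t(u)=\Delta_t^+(u)-\Delta_t^-(u)$. Then $c_{t+1}(u)=c_t(u)+\Delta_t(u)$ for all $u$ simultaneously. The pair $(G,c_0)$ is called tight if the process is eventually fixed or eventually periodic with period length $2$, i.e. there exists $t\geq0$ with $c_{t+2}=c_t$. A configuration $c_i$ has property plus if (1) $c_i(u)+\Delta_i(u)>c_i(v)+\Delta_i(v)$ for every edge $uv$ with $c_i(u)<c_i(v)$, and (2) $c_i(u)+\Delta_i(u)=c_i(v)+\Delta_i(v)$ for every edge $uv$ with $c_i(u)=c_i(v)$. *)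

theory Defs
  imports Main
begin

definition simple_graph :: "'a set \<Rightarrow> ('a \<Rightarrow> 'a \<Rightarrow> bool) \<Rightarrow> bool" where
  "simple_graph V E \<longleftrightarrow> finite V \<and> (\<forall>u v. E u v \<longrightarrow> u \<in> V \<and> v \<in> V)
     \<and> (\<forall>u v. E u v \<longrightarrow> E v u) \<and> (\<forall>u. \<not> E u u)"

definition nbhd :: "'a set \<Rightarrow> ('a \<Rightarrow> 'a \<Rightarrow> bool) \<Rightarrow> 'a \<Rightarrow> 'a set" where
  "nbhd V E u = {w \<in> V. E u w}"

definition delta_minus :: "'a set \<Rightarrow> ('a \<Rightarrow> 'a \<Rightarrow> bool) \<Rightarrow> ('a \<Rightarrow> int) \<Rightarrow> 'a \<Rightarrow> int" where
  "delta_minus V E c u = int (card {w \<in> nbhd V E u. c u > c w})"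

definition delta_plus :: "'a set \<Rightarrow> ('a \<Rightarrow> 'a \<Rightarrow> bool) \<Rightarrow> ('a \<Rightarrow> int) \<Rightarrow> 'a \<Rightarrow> int" where
  "delta_plus V E c u = int (card {w \<in> nbhd V E u. c u < c w})"

definition delta :: "'a set \<Rightarrow> ('a \<Rightarrow> 'a \<Rightarrow> bool) \<Rightarrow> ('a \<Rightarrow> int) \<Rightarrow> 'a \<Rightarrow> int" where
  "delta V E c u = delta_plus V E c u - delta_minus V E c u"

definition diff_step :: "'a set \<Rightarrow> ('a \<Rightarrow> 'a \<Rightarrow> bool) \<Rightarrow> ('a \<Rightarrow> int) \<Rightarrow> ('a \<Rightarrow> int)" where
  "diff_step V E c = (\<lambda>u. c u + delta V E c u)"

definition config :: "'a set \<Rightarrow> ('a \<Rightarrow> 'a \<Rightarrow> bool) \<Rightarrow> ('a \<Rightarrow> int) \<Rightarrow> nat \<Rightarrow> ('a \<Rightarrow> int)" where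
  "config V E c0 t = (diff_step V E ^^ t) c0"

definition tight :: "'a set \<Rightarrow> ('a \<Rightarrow> 'a \<Rightarrow> bool) \<Rightarrow> ('a \<Rightarrow> int) \<Rightarrow> bool" where
  "tight V E c0 \<longleftrightarrow> (\<exists>t. \<forall>u\<in>V. config V E c0 (t + 2) u = config V E c0 t u)"

definition property_plus :: "'a set \<Rightarrow> ('a \<Rightarrow> 'a \<Rightarrow> bool) \<Rightarrow> ('a \<Rightarrow> int) \<Rightarrow> bool" where
  "property_plus V E c \<longleftrightarrow>
     (\<forall>u v. E u v \<longrightarrow> c u < c v \<longrightarrow> c u + delta V E c u > c v + delta V E c v) \<and>
     (\<forall>u v. E u v \<longrightarrow> c u = c v \<longrightarrow> c u + delta V E c u = c v + delta V E c v)"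

end

theory Submission
  imports Defs
begin

text \<open>Property plus says exactly that one step reverses every strict edge orientation and
  keeps every tie; since \<open>\<Delta>(u)\<close> is a sum of signs over the edges at \<open>u\<close>, the next step then
  undoes the first. Conversely, if \<open>a = c\<^sub>t\<close>, \<open>b = c\<^sub>t\<^sub>+\<^sub>1\<close> and \<open>c\<^sub>t\<^sub>+\<^sub>2 = a\<close>, the
  edge function \<open>F(u,w) = sgn(a w - a u) + sgn(b w - b u)\<close> is antisymmetric with net flow
  \<open>\<Delta>\<^sub>a(u) + \<Delta>\<^sub>b(u) = 0\<close> at every vertex, so it is orthogonal to the gradients of \<open>a\<close>
  and \<open>b\<close>. Every term of these pairings is nonnegative, hence zero, which forces \<open>F = 0\<close> on
  every edge: the orientation reversal at time \<open>t\<close>.\<close>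

lemma card_filter_eq_sum:
  assumes "finite A"
  shows "int (card {x\<in>A. P x}) = (\<Sum>x\<in>A. if P x then 1 else 0)"
  using sum.inter_filter[OF assms, of "\<lambda>_. 1::int" P] by simp

lemma delta_eq_sum_sgn:
  assumes "finite V"
  shows "delta V E c u = (\<Sum>w\<in>nbhd V E u. sgn (c w - c u))"
proof -
  have fin: "finite (nbhd V E u)"
    using assms unfolding nbhd_def by simp
  have "delta V E c u
      = (\<Sum>w\<in>nbhd V E u. (if c u < c w then 1 else 0) - (if c w < c u then 1 else 0))"
    unfolding delta_def delta_plus_def delta_minus_def
    by (simp add: card_filter_eq_sum[OF fin] sum_subtractf)
  also have "\<dots> = (\<Sum>w\<in>nbhd V E u. sgn (c w - c u))"
    by (rule sum.cong) (auto simp: sgn_if)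
  finally show ?thesis .
qed

lemma property_plus_iff_sgn_reversed:
  assumes sym: "\<And>u v. E u v \<Longrightarrow> E v u"
  shows "property_plus V E c \<longleftrightarrow>
    (\<forall>u v. E u v \<longrightarrow> sgn (diff_step V E c v - diff_step V E c u) = - sgn (c v - c u))"
proof
  assume pp: "property_plus V E c"
  have lt: "diff_step V E c v < diff_step V E c u" if "E u v" "c u < c v" for u v
    using pp that unfolding property_plus_def diff_step_def by auto
  have eq: "diff_step V E c u = diff_step V E c v" if "E u v" "c u = c v" for u v
    using pp that unfolding property_plus_def diff_step_def by auto
  show "\<forall>u v. E u v \<longrightarrow> sgn (diff_step V E c v - diff_step V E c u) = - sgn (c v - c u)"
  proof (intro allI impI)
    fix u v assume e: "E u v"
    consider "c u < c v" | "c u = c v" | "c v < c u" by linarith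
    then show "sgn (diff_step V E c v - diff_step V E c u) = - sgn (c v - c u)"
    proof cases
      case 1 with lt[OF e] show ?thesis by simp
    next
      case 2 with eq[OF e] show ?thesis by simp
    next
      case 3 with lt[OF sym[OF e]] show ?thesis by simp
    qed
  qed
next
  assume rev: "\<forall>u v. E u v \<longrightarrow> sgn (diff_step V E c v - diff_step V E c u) = - sgn (c v - c u)"
  show "property_plus V E c"
    unfolding property_plus_def
  proof (intro conjI allI impI)
    fix u v assume "E u v" "c u < c v"
    then have "sgn (diff_step V E c v - diff_step V E c u) = -1"
      using rev by simp
    then show "c u + delta V E c u > c v + delta V E c v"
      by (simp add: diff_step_def sgn_if split: if_splits)
  next
    fix u v assume "E u v" "c u = c v"
    then have "sgn (diff_step V E c v - diff_step V E c u) = 0"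
      using rev by simp
    then show "c u + delta V E c u = c v + delta V E c v"
      by (simp add: diff_step_def sgn_if split: if_splits)
  qed
qed

lemma property_plus_imp_period_two:
  assumes "finite V" and "\<And>u v. E u v \<Longrightarrow> E v u" and "property_plus V E c"
  shows "diff_step V E (diff_step V E c) = c"
proof
  fix u
  have rev: "sgn (diff_step V E c w - diff_step V E c u) = - sgn (c w - c u)"
    if "w \<in> nbhd V E u" for w
    using that assms property_plus_iff_sgn_reversed[of E V c] by (simp add: nbhd_def)
  have "delta V E (diff_step V E c) u = - delta V E c u"
    by (simp add: delta_eq_sum_sgn[OF assms(1)] rev sum_negf)
  then show "diff_step V E (diff_step V E c) u = c u"
    by (simp add: diff_step_def)
qed

lemma sum_gradient_times_flow_eq_zero:
  fixes F :: "'a \<Rightarrow> 'a \<Rightarrow> int" and f :: "'a \<Rightarrow> int"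
  assumes "finite V" and sym: "\<And>u v. E u v \<Longrightarrow> E v u"
    and antisym: "\<And>u w. F w u = - F u w"
    and conserv: "\<And>u. u \<in> V \<Longrightarrow> (\<Sum>w\<in>nbhd V E u. F u w) = 0"
  shows "(\<Sum>(u,w)\<in>Sigma V (nbhd V E). (f w - f u) * F u w) = 0"
proof -
  let ?P = "Sigma V (nbhd V E)"
  have fin_nbhd: "\<forall>u\<in>V. finite (nbhd V E u)"
    using assms(1) unfolding nbhd_def by simp
  have out: "(\<Sum>(u,w)\<in>?P. f u * F u w) = 0"
  proof -
    have "(\<Sum>(u,w)\<in>?P. f u * F u w) = (\<Sum>u\<in>V. f u * (\<Sum>w\<in>nbhd V E u. F u w))"
      by (simp add: sum.Sigma[OF assms(1) fin_nbhd, symmetric] sum_distrib_left)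
    also have "\<dots> = 0"
      by (simp add: conserv)
    finally show ?thesis .
  qed
  have swap: "bij_betw (\<lambda>(u,w). (w,u)) ?P ?P"
    by (rule bij_betw_byWitness[where f'="\<lambda>(u,w). (w,u)"]) (auto simp: nbhd_def sym)
  have "(\<Sum>(u,w)\<in>?P. f w * F u w) = (\<Sum>(u,w)\<in>?P. f u * F w u)"
    using sum.reindex_bij_betw[OF swap, of "\<lambda>(u,w). f w * F u w"]
    by (simp add: case_prod_unfold)
  also have "\<dots> = (\<Sum>(u,w)\<in>?P. - (f u * F u w))"
    by (intro sum.cong refl) (simp add: case_prod_beta, subst antisym, simp)
  also have "\<dots> = - (\<Sum>(u,w)\<in>?P. f u * F u w)"
    by (simp add: case_prod_unfold sum_negf)
  finally have in_: "(\<Sum>(u,w)\<in>?P. f w * F u w) = 0"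
    using out by simp
  show ?thesis
    using out in_ by (simp add: case_prod_unfold left_diff_distrib sum_subtractf)
qed

lemma gradient_times_flow_eq_zero_if_nonneg:
  fixes F :: "'a \<Rightarrow> 'a \<Rightarrow> int" and f :: "'a \<Rightarrow> int"
  assumes "finite V" and "\<And>u v. E u v \<Longrightarrow> E v u"
    and "\<And>u w. F w u = - F u w"
    and "\<And>u. u \<in> V \<Longrightarrow> (\<Sum>w\<in>nbhd V E u. F u w) = 0"
    and nonneg: "\<And>u w. u \<in> V \<Longrightarrow> w \<in> nbhd V E u \<Longrightarrow> 0 \<le> (f w - f u) * F u w"
    and "u \<in> V" and "w \<in> nbhd V E u"
  shows "(f w - f u) * F u w = 0"
proof -
  have "finite (Sigma V (nbhd V E))"
    using assms(1) by (auto simp: nbhd_def)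
  moreover have "(\<Sum>(u,w)\<in>Sigma V (nbhd V E). (f w - f u) * F u w) = 0"
    using sum_gradient_times_flow_eq_zero[OF assms(1-4)] .
  ultimately show ?thesis
    using sum_nonneg_eq_0_iff[of "Sigma V (nbhd V E)" "\<lambda>(u,w). (f w - f u) * F u w"]
      nonneg assms(6,7) by auto
qed

lemma period_two_imp_property_plus:
  assumes "simple_graph V E"
    and period: "\<And>u. u \<in> V \<Longrightarrow> diff_step V E (diff_step V E a) u = a u"
  shows "property_plus V E a"
proof -
  have finV: "finite V" and sym: "\<And>u v. E u v \<Longrightarrow> E v u"
    and inV: "\<And>u v. E u v \<Longrightarrow> u \<in> V \<and> v \<in> V"
    using assms(1) unfolding simple_graph_def by auto
  define b where "b = diff_step V E a"
  define F where "F = (\<lambda>u w. sgn (a w - a u) + sgn (b w - b u))"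
  have antisym: "F w u = - F u w" for u w
    unfolding F_def by (simp add: sgn_if)
  have conserv: "(\<Sum>w\<in>nbhd V E u. F u w) = 0" if "u \<in> V" for u
  proof -
    have "(\<Sum>w\<in>nbhd V E u. F u w) = delta V E a u + delta V E b u"
      unfolding F_def by (simp add: delta_eq_sum_sgn[OF finV] sum.distrib)
    also have "\<dots> = 0"
      using period[OF that] unfolding b_def diff_step_def by simp
    finally show ?thesis .
  qed
  have "F u w = 0" if "E u w" for u w
  proof -
    have uw: "u \<in> V" "w \<in> nbhd V E u"
      using that inV unfolding nbhd_def by auto
    have "(f w - f u) * F u w = 0" if "f = a \<or> f = b" for f
    proof (rule gradient_times_flow_eq_zero_if_nonneg[OF finV sym antisym conserv _ uw])
      show "0 \<le> (f y - f x) * F x y" for x y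
        using that unfolding F_def by (auto simp: sgn_if)
    qed
    then have "(a w - a u) * F u w = 0" and "(b w - b u) * F u w = 0"
      by blast+
    then show ?thesis
      unfolding F_def by (metis add.right_neutral diff_self mult_eq_0_iff sgn_0)
  qed
  then have "\<forall>u w. E u w \<longrightarrow> sgn (b w - b u) = - sgn (a w - a u)"
    unfolding F_def by (simp add: eq_neg_iff_add_eq_0 add.commute)
  then show ?thesis
    using sym property_plus_iff_sgn_reversed[of E V a] unfolding b_def by blast
qed

lemma config_add_2: "config V E c0 (t + 2) = diff_step V E (diff_step V E (config V E c0 t))"
  by (simp add: config_def)

theorem theorem14:
  fixes V :: "'a set" and E :: "'a \<Rightarrow> 'a \<Rightarrow> bool" and c0 :: "'a \<Rightarrow> int"
  assumes "simple_graph V E"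
  shows "tight V E c0 \<longleftrightarrow> (\<exists>t. property_plus V E (config V E c0 t))"
proof
  assume "tight V E c0"
  then obtain t where "\<forall>u\<in>V. config V E c0 (t + 2) u = config V E c0 t u"
    unfolding tight_def by blast
  then have "property_plus V E (config V E c0 t)"
    unfolding config_add_2 by (intro period_two_imp_property_plus[OF assms]) simp
  then show "\<exists>t. property_plus V E (config V E c0 t)" ..
next
  assume "\<exists>t. property_plus V E (config V E c0 t)"
  then obtain t where "property_plus V E (config V E c0 t)" ..
  moreover have "finite V" and "\<And>u v. E u v \<Longrightarrow> E v u"
    using assms unfolding simple_graph_def by auto
  ultimately have "config V E c0 (t + 2) = config V E c0 t"
    unfolding config_add_2 by (intro property_plus_imp_period_two)
  then show "tight V E c0"
    unfolding tight_def by metis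
qed

end
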